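(* Let $\mathbf K$ be a tridiagonal, irreducible, row-stochastic and reversible transition matrix with stationary distribution $\boldsymbol\pi$, and let $\mathbf e_i$ denote the probability vector concentrated on the $i$-th state. Then for adjacent sites, $$\mathcal W_N(\mathbf e_i,\mathbf e_{i+1})=\int_0^1\frac{dr}{\sqrt{\beta\big(K_{i+1,i}\,r,\;K_{i,i+1}(1-r)\big)}} .$$
   Context: $\mathbf K$ row-stochastic, irreducible, reversible means $\sum_jK_{ij}=1$, and there is a positive probability vector $\boldsymbol\pi$ with $\pi_iK_{ij}=\pi_jK_{ji}$ for all $i,j$. $\beta$ is the logarithmic mean: $\beta(x,y)=\frac{x-y}{\log x-\log y}$ if $x\ne y$, $\beta(x,x)=x$. Discrete Wasserstein distance (Maas): for probability densities $\mathbf Q^0,\mathbf Q^1$ with respect to $\boldsymbol\pi$ (nonnegative vectors with $\sum_iQ_i\pi_i=1$), $\mathcal W_N^2(\mathbf Q^0,\mathbf Q^1)$ is the infimum of $\frac12\int_0^1\sum_{i,j}|\psi_i^\tau-\psi_j^\tau|^2K_{ij}\beta(Q_i^\tau,Q_j^\tau)\pi_i\,d\tau$ over all piecewise $C^1$ curves $\tau\mapsto\mathbf Q^\tau\in\mathbb R_+^n$ of probability densities and measurable $\tau\mapsto\boldsymbol\psi^\tau\in\mathbb R^n$ satisfying $\frac{d}{d\tau}Q_i^\tau+\sum_j(\psi_j^\tau-\psi_i^\tau)K_{ij}\beta(Q_i^\tau,Q_j^\tau)=0$ for a.e. $\tau$ and all $i$, with $\mathbf Q^\tau|_{\tau=0}=\mathbf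 Q^0$, $\mathbf Q^\tau|_{\tau=1}=\mathbf Q^1$. For probability vectors $\mathbf q^0,\mathbf q^1$ one sets $\mathcal W_N(\mathbf q^0,\mathbf q^1):=\mathcal W_N(\mathbf q^0/\boldsymbol\pi,\mathbf q^1/\boldsymbol\pi)$ (entrywise division). *)

theory Defs
  imports "HOL-Analysis.Analysis"
begin

text \<open>States are indexed by 0..n-1; a matrix is a function nat => nat => real,
  a vector is a function nat => real (entries outside 0..n-1 are irrelevant).\<close>

definition log_mean :: "real \<Rightarrow> real \<Rightarrow> real" where
  "log_mean x y = (if x = y then x
     else if x \<le> 0 \<or> y \<le> 0 then 0
     else (x - y) / (ln x - ln y))"

definition row_stochastic :: "nat \<Rightarrow> (nat \<Rightarrow> nat \<Rightarrow> real) \<Rightarrow> bool" where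
  "row_stochastic n K \<longleftrightarrow> (\<forall>i<n. \<forall>j<n. K i j \<ge> 0) \<and> (\<forall>i<n. (\<Sum>j<n. K i j) = 1)"

definition irreducible_mat :: "nat \<Rightarrow> (nat \<Rightarrow> nat \<Rightarrow> real) \<Rightarrow> bool" where
  "irreducible_mat n K \<longleftrightarrow>
     (\<forall>i<n. \<forall>j<n. (i, j) \<in> {(a, b). a < n \<and> b < n \<and> K a b > 0}\<^sup>*)"

definition tridiagonal :: "nat \<Rightarrow> (nat \<Rightarrow> nat \<Rightarrow> real) \<Rightarrow> bool" where
  "tridiagonal n K \<longleftrightarrow> (\<forall>i<n. \<forall>j<n. i + 1 < j \<or> j + 1 < i \<longrightarrow> K i j = 0)"

definition reversible_wrt :: "nat \<Rightarrow> (nat \<Rightarrow> nat \<Rightarrow> real) \<Rightarrow> (nat \<Rightarrow> real) \<Rightarrow> bool" where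
  "reversible_wrt n K \<pi> \<longleftrightarrow> (\<forall>i<n. \<pi> i > 0) \<and> (\<Sum>i<n. \<pi> i) = 1 \<and>
     (\<forall>i<n. \<forall>j<n. \<pi> i * K i j = \<pi> j * K j i)"

definition prob_density :: "nat \<Rightarrow> (nat \<Rightarrow> real) \<Rightarrow> (nat \<Rightarrow> real) \<Rightarrow> bool" where
  "prob_density n \<pi> Q \<longleftrightarrow> (\<forall>i<n. Q i \<ge> 0) \<and> (\<Sum>i<n. Q i * \<pi> i) = 1"

definition admissible_path ::
  "nat \<Rightarrow> (nat \<Rightarrow> nat \<Rightarrow> real) \<Rightarrow> (nat \<Rightarrow> real) \<Rightarrow> (nat \<Rightarrow> real) \<Rightarrow> (nat \<Rightarrow> real)
   \<Rightarrow> (real \<Rightarrow> nat \<Rightarrow> real) \<Rightarrow> (real \<Rightarrow> nat \<Rightarrow> real) \<Rightarrow> bool" where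
  "admissible_path n K \<pi> Q0 Q1 Q \<psi> \<longleftrightarrow>
     (\<forall>i<n. (\<lambda>\<tau>. Q \<tau> i) piecewise_C1_differentiable_on {0..1}) \<and>
     (\<forall>\<tau>\<in>{0..1}. prob_density n \<pi> (Q \<tau>)) \<and>
     (\<forall>i<n. (\<lambda>\<tau>. \<psi> \<tau> i) \<in> borel_measurable lborel) \<and>
     (AE \<tau> in lborel. \<tau> \<in> {0..1} \<longrightarrow> (\<forall>i<n.
        ((\<lambda>t. Q t i) has_real_derivative
          - (\<Sum>j<n. (\<psi> \<tau> j - \<psi> \<tau> i) * K i j * log_mean (Q \<tau> i) (Q \<tau> j))) (at \<tau>))) \<and>
     (\<forall>i<n. Q 0 i = Q0 i \<and> Q 1 i = Q1 i)"

definition action ::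
  "nat \<Rightarrow> (nat \<Rightarrow> nat \<Rightarrow> real) \<Rightarrow> (nat \<Rightarrow> real) \<Rightarrow> (real \<Rightarrow> nat \<Rightarrow> real)
   \<Rightarrow> (real \<Rightarrow> nat \<Rightarrow> real) \<Rightarrow> ennreal" where
  "action n K \<pi> Q \<psi> = (\<integral>\<^sup>+ \<tau>\<in>{0..1}.
      ennreal ((1/2) * (\<Sum>i<n. \<Sum>j<n. (\<psi> \<tau> i - \<psi> \<tau> j)\<^sup>2 * K i j
                  * log_mean (Q \<tau> i) (Q \<tau> j) * \<pi> i)) \<partial>lborel)"

definition W_N_sq_dens ::
  "nat \<Rightarrow> (nat \<Rightarrow> nat \<Rightarrow> real) \<Rightarrow> (nat \<Rightarrow> real) \<Rightarrow> (nat \<Rightarrow> real) \<Rightarrow> (nat \<Rightarrow> real) \<Rightarrow> ennreal" where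
  "W_N_sq_dens n K \<pi> Q0 Q1 =
     (INF p \<in> {(Q, \<psi>). admissible_path n K \<pi> Q0 Q1 Q \<psi>}. action n K \<pi> (fst p) (snd p))"

definition W_N_dens ::
  "nat \<Rightarrow> (nat \<Rightarrow> nat \<Rightarrow> real) \<Rightarrow> (nat \<Rightarrow> real) \<Rightarrow> (nat \<Rightarrow> real) \<Rightarrow> (nat \<Rightarrow> real) \<Rightarrow> real" where
  "W_N_dens n K \<pi> Q0 Q1 = sqrt (enn2real (W_N_sq_dens n K \<pi> Q0 Q1))"

definition W_N_prob ::
  "nat \<Rightarrow> (nat \<Rightarrow> nat \<Rightarrow> real) \<Rightarrow> (nat \<Rightarrow> real) \<Rightarrow> (nat \<Rightarrow> real) \<Rightarrow> (nat \<Rightarrow> real) \<Rightarrow> real" where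
  "W_N_prob n K \<pi> q0 q1 = W_N_dens n K \<pi> (\<lambda>i. q0 i / \<pi> i) (\<lambda>i. q1 i / \<pi> i)"

definition unit_vec :: "nat \<Rightarrow> nat \<Rightarrow> real" where
  "unit_vec i = (\<lambda>j. if j = i then 1 else 0)"

end

theory Submission
  imports Defs
begin

text \<open>Write \<open>p = K (i+1) i\<close>, \<open>q = K i (i+1)\<close> and \<open>h r = log_mean (p r) (q (1 - r))\<close>.
  Along any admissible path from \<open>unit_vec i\<close> to \<open>unit_vec (i+1)\<close>, the mass \<open>F\<close> to the
  right of the edge \<open>(i, i+1)\<close> moves from \<open>0\<close> to \<open>1\<close>. Because the chain is tridiagonal,
  \<open>F'\<close> is the flux through this single edge, and Cauchy--Schwarz on the edge together with the
  monotonicity of the logarithmic mean gives \<open>F'\<^sup>2 \<le> a \<cdot> h F\<close>, where \<open>a\<close> is the action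
  density. Hence the action is at least the squared length of \<open>[0, 1]\<close> in the metric
  \<open>dr / sqrt (h r)\<close>. Conversely, the path that keeps all mass on the states \<open>i\<close> and \<open>i+1\<close>
  and moves it along this metric at constant speed attains the bound.\<close>

section \<open>The logarithmic mean\<close>

lemma log_mean_commute: "log_mean x y = log_mean y x"
  unfolding log_mean_def by (auto simp: divide_simps) (auto simp: algebra_simps)

lemma log_mean_0_left [simp]: "log_mean 0 x = 0"
  and log_mean_0_right [simp]: "log_mean x 0 = 0"
  unfolding log_mean_def by auto

lemma log_mean_pos:
  assumes "0 < x" "0 < y"
  shows "0 < log_mean x y"
proof (cases x y rule: linorder_cases)
  case less
  then show ?thesis using assms by (simp add: log_mean_def divide_neg_neg)
next
  case greater
  then show ?thesis using assms by (simp add: log_mean_def)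
qed (use assms in \<open>simp add: log_mean_def\<close>)

lemma log_mean_nonneg: "0 \<le> x \<Longrightarrow> 0 \<le> y \<Longrightarrow> 0 \<le> log_mean x y"
  using log_mean_pos[of x y] by (cases "x = 0 \<or> y = 0") auto

lemma log_mean_mult:
  assumes "0 < c"
  shows "log_mean (c * x) (c * y) = c * log_mean x y"
proof -
  have "x > 0 \<Longrightarrow> y > 0 \<Longrightarrow> ln (c * x) - ln (c * y) = ln x - ln y"
    using assms by (simp add: ln_mult)
  then show ?thesis
    using assms unfolding log_mean_def by (auto simp: algebra_simps mult_le_0_iff not_le)
qed

lemma log_mean_eq_scaled: "0 < x \<Longrightarrow> 0 < y \<Longrightarrow> log_mean x y = y * log_mean (x / y) 1"
  using log_mean_mult[of y "x / y" 1] by simp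

lemma log_mean_1_eq: "0 < u \<Longrightarrow> u \<noteq> 1 \<Longrightarrow> log_mean u 1 = (u - 1) / ln u"
  by (simp add: log_mean_def)

lemma isCont_log_mean_1:
  assumes "0 < u"
  shows "isCont (\<lambda>u. log_mean u 1) u"
proof (cases "u = 1")
  case True
  have "((\<lambda>y. (ln y - ln 1) / (y - 1)) \<longlongrightarrow> 1) (at (1::real))"
    using DERIV_ln[of 1] by (simp add: has_field_derivative_iff)
  then have "((\<lambda>y. inverse ((ln y - ln 1) / (y - 1))) \<longlongrightarrow> 1) (at (1::real))"
    using tendsto_inverse by fastforce
  moreover have "eventually (\<lambda>y. inverse ((ln y - ln 1) / (y - 1)) = log_mean y 1) (at (1::real))"
    unfolding eventually_at
    by (rule exI[of _ "1/2"]) (auto simp: dist_real_def abs_if log_mean_1_eq)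
  ultimately have "((\<lambda>y. log_mean y 1) \<longlongrightarrow> 1) (at 1)"
    using tendsto_cong by fastforce
  then show ?thesis
    using True by (simp add: isCont_def log_mean_def)
next
  case False
  have "eventually (\<lambda>y. y \<in> {0<..} - {1}) (nhds u)"
    by (rule eventually_nhds_in_open) (use assms False in auto)
  then have "eventually (\<lambda>y. (y - 1) / ln y = log_mean y 1) (nhds u)"
    by eventually_elim (simp add: log_mean_1_eq)
  moreover have "isCont (\<lambda>y. (y - 1) / ln y) u"
    using assms False by (intro continuous_intros) auto
  ultimately show ?thesis
    by (simp add: isCont_cong)
qed

text \<open>Away from \<open>u = 1\<close>, the derivative of \<open>(u - 1) / ln u\<close> has the sign of
  \<open>ln u - (1 - 1/u) \<ge> 0\<close>.\<close>

lemma log_mean_1_deriv_nonneg: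
  assumes "0 < u" "u \<noteq> 1"
  shows "\<exists>D. DERIV (\<lambda>u. log_mean u 1) u :> D \<and> 0 \<le> D"
proof -
  let ?D = "(ln u - (u - 1) / u) / (ln u * ln u)"
  have "DERIV (\<lambda>y. (y - 1) / ln y) u :> ?D"
    using assms by (auto intro!: derivative_eq_intros simp: field_simps)
  then have "DERIV (\<lambda>u. log_mean u 1) u :> ?D"
    by (rule has_field_derivative_transform_within_open[of _ _ _ "{0<..} - {1}"])
       (use assms in \<open>auto simp: log_mean_1_eq\<close>)
  moreover have "(u - 1) / u \<le> ln u"
    using ln_le_minus_one[of "1 / u"] assms by (simp add: ln_div field_simps)
  ultimately show ?thesis by fastforce
qed

lemma log_mean_1_mono:
  assumes "0 < a" "a \<le> b"
  shows "log_mean a 1 \<le> log_mean b 1"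
proof -
  have cont: "continuous_on {x..y} (\<lambda>u. log_mean u 1)" if "0 < x" for x y
    using that by (intro continuous_at_imp_continuous_on ballI isCont_log_mean_1) auto
  have mono: "log_mean x 1 \<le> log_mean y 1" if "0 < x" "x \<le> y" "y \<le> 1 \<or> 1 \<le> x" for x y
    using that cont[of x y] log_mean_1_deriv_nonneg
    by (intro DERIV_nonneg_imp_increasing_open[OF \<open>x \<le> y\<close>]) auto
  show ?thesis
  proof (cases "b \<le> 1 \<or> 1 \<le> a")
    case False
    then show ?thesis
      using mono[of a 1] mono[of 1 b] assms by linarith
  qed (use mono assms in auto)
qed

lemma isCont_log_mean [continuous_intros]:
  fixes f g :: "'a::t2_space \<Rightarrow> real"
  assumes f: "isCont f a" and g: "isCont g a" and pos: "0 < f a" "0 < g a"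
  shows "isCont (\<lambda>x. log_mean (f x) (g x)) a"
proof -
  have "eventually (\<lambda>x. 0 < f x) (nhds a)" "eventually (\<lambda>x. 0 < g x) (nhds a)"
    using order_tendstoD(1)[OF f[unfolded isCont_def tendsto_at_iff_tendsto_nhds] pos(1)]
      order_tendstoD(1)[OF g[unfolded isCont_def tendsto_at_iff_tendsto_nhds] pos(2)] .
  then have "eventually (\<lambda>x. g x * log_mean (f x / g x) 1 = log_mean (f x) (g x)) (nhds a)"
    by eventually_elim (metis log_mean_eq_scaled)
  moreover have "isCont (\<lambda>x. log_mean (f x / g x) 1) a"
    using continuous_at_compose[OF isCont_divide[OF f g] isCont_log_mean_1] pos
    by (simp add: o_def)
  then have "isCont (\<lambda>x. g x * log_mean (f x / g x) 1) a"
    using g by (rule isCont_mult[rotated])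
  ultimately show ?thesis
    by (simp add: isCont_cong)
qed

lemma log_mean_mono_left:
  assumes "0 \<le> x" "x \<le> x'" "0 \<le> y"
  shows "log_mean x y \<le> log_mean x' y"
proof (cases "x = 0 \<or> y = 0")
  case True
  then show ?thesis using assms log_mean_nonneg[of x' y] by auto
next
  case False
  with assms have "log_mean (x / y) 1 \<le> log_mean (x' / y) 1"
    by (intro log_mean_1_mono) (auto simp: divide_right_mono)
  moreover have "log_mean x y = y * log_mean (x / y) 1" "log_mean x' y = y * log_mean (x' / y) 1"
    using False assms by (auto intro: log_mean_eq_scaled)
  ultimately show ?thesis
    using False assms by (simp add: mult_left_mono)
qed

lemma log_mean_mono:
  assumes "0 \<le> x" "x \<le> x'" "0 \<le> y" "y \<le> y'"
  shows "log_mean x y \<le> log_mean x' y'"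
  using log_mean_mono_left[of x x' y] log_mean_mono_left[of y y' x'] assms
  by (simp add: log_mean_commute)

lemma log_mean_ge_min: "0 \<le> x \<Longrightarrow> 0 \<le> y \<Longrightarrow> min x y \<le> log_mean x y"
  using log_mean_mono[of "min x y" x "min x y" y] by (simp add: log_mean_def)

lemma borel_measurable_log_mean [measurable]:
  assumes [measurable]: "f \<in> borel_measurable M" "g \<in> borel_measurable M"
  shows "(\<lambda>x. log_mean (f x) (g x)) \<in> borel_measurable M"
  unfolding log_mean_def by measurable

section \<open>The metric of a single edge\<close>

definition edge_mean :: "real \<Rightarrow> real \<Rightarrow> real \<Rightarrow> real" where
  "edge_mean p q r = log_mean (p * r) (q * (1 - r))"

definition edge_metric :: "real \<Rightarrow> real \<Rightarrow> real \<Rightarrow> real" where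
  "edge_metric p q r = 1 / sqrt (edge_mean p q r)"

definition edge_arclength :: "real \<Rightarrow> real \<Rightarrow> real \<Rightarrow> real" where
  "edge_arclength p q y = integral {0..y} (edge_metric p q)"

text \<open>The inverse of the normalised arclength, i.e. the constant-speed parametrisation of
  \<open>[0, 1]\<close> in unit time. It is junk outside \<open>t \<in> [0, 1]\<close>.\<close>

definition edge_geodesic :: "real \<Rightarrow> real \<Rightarrow> real \<Rightarrow> real" where
  "edge_geodesic p q t = (THE y. y \<in> {0..1} \<and> edge_arclength p q y = edge_arclength p q 1 * t)"

text \<open>Potential driving the geodesic \<open>m\<close>: with \<open>L\<close> the total arclength and
  \<open>\<phi> = L / sqrt (edge_mean m)\<close>, the geodesic ODE reads
  \<open>m' = \<phi> \<cdot> edge_mean m\<close>, the continuity equation of the chain, and the action density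
  \<open>\<phi>\<^sup>2 \<cdot> edge_mean m = L\<^sup>2\<close> is constant.\<close>

definition edge_geodesic_potential :: "real \<Rightarrow> real \<Rightarrow> real \<Rightarrow> real" where
  "edge_geodesic_potential p q t =
     (if t \<in> {0<..<1} then edge_arclength p q 1 / sqrt (edge_mean p q (edge_geodesic p q t)) else 0)"

lemma has_integral_inverse_sqrt_endpoints:
  "((\<lambda>r. 1 / sqrt r + 1 / sqrt (1 - r)) has_integral 4) {0..1}"
proof -
  have "((\<lambda>r. 1 / sqrt r + 1 / sqrt (1 - r)) has_integral
          (2 * sqrt 1 - 2 * sqrt (1 - 1)) - (2 * sqrt 0 - 2 * sqrt (1 - 0))) {0..1}"
  proof (rule fundamental_theorem_of_calculus_interior)
    fix x :: real
    assume "x \<in> {0<..<1}"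
    then have "((\<lambda>r. 2 * sqrt r - 2 * sqrt (1 - r)) has_real_derivative
                 1 / sqrt x + 1 / sqrt (1 - x)) (at x)"
      by (auto intro!: derivative_eq_intros simp: divide_simps)
    then show "((\<lambda>r. 2 * sqrt r - 2 * sqrt (1 - r)) has_vector_derivative
                 1 / sqrt x + 1 / sqrt (1 - x)) (at x)"
      by (simp add: has_real_derivative_iff_has_vector_derivative)
  qed (auto intro!: continuous_intros)
  then show ?thesis by simp
qed

lemma crossing_interval:
  fixes F :: "real \<Rightarrow> real"
  assumes F: "continuous_on {a..b} F" and "a \<le> b" "F a \<le> c" "d \<le> F b" "c < d"
  obtains s t where "a \<le> s" "s < t" "t \<le> b" "F s \<le> c" "d \<le> F t"
    and "\<And>x. s < x \<Longrightarrow> x < t \<Longrightarrow> c < F x \<and> F x < d"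
proof -
  define T where "T = {a..b} \<inter> F -` {d..}"
  define t where "t = Inf T"
  have "closed T"
    unfolding T_def using F by (rule continuous_closed_preimage) auto
  moreover have "b \<in> T" "bdd_below T"
    unfolding T_def using assms by (auto intro: bdd_belowI[of _ a])
  ultimately have "t \<in> T"
    unfolding t_def using closed_contains_Inf by blast
  then have t: "a \<le> t" "t \<le> b" "d \<le> F t"
    unfolding T_def by auto
  have below: "F x < d" if "a \<le> x" "x < t" for x
    using that t cInf_lower[OF _ \<open>bdd_below T\<close>, of x] unfolding T_def t_def by force
  define U where "U = {a..t} \<inter> F -` {..c}"
  define s where "s = Sup U"
  have "closed U"
    unfolding U_def using t by (intro continuous_closed_preimage continuous_on_subset[OF F]) auto
  moreover have "a \<in> U" "bdd_above U"
    unfolding U_def using assms t by (auto intro: bdd_aboveI[of _ t])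
  ultimately have "s \<in> U"
    unfolding s_def using closed_contains_Sup by blast
  then have s: "a \<le> s" "s \<le> t" "F s \<le> c"
    unfolding U_def by auto
  have above: "c < F x" if "s < x" "x \<le> t" for x
    using that s cSup_upper[OF _ \<open>bdd_above U\<close>, of x] unfolding U_def s_def by force
  have "s \<noteq> t"
    using s t \<open>c < d\<close> by auto
  show thesis
    using s t below above \<open>s \<noteq> t\<close> by (intro that) auto
qed

text \<open>Cauchy--Schwarz without assuming \<open>u\<^sup>2\<close> integrable: integrate
  \<open>2 \<mu> u - \<mu>\<^sup>2 \<le> u\<^sup>2 \<le> a\<close> with \<open>\<mu> = I / (t - s)\<close>.\<close>

lemma has_integral_sq_le:
  fixes u a :: "real \<Rightarrow> real"
  assumes u: "(u has_integral I) {s..t}" and a: "(a has_integral A) {s..t}"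
    and N: "negligible N" and le: "\<And>x. x \<in> {s..t} - N \<Longrightarrow> (u x)\<^sup>2 \<le> a x"
  shows "I\<^sup>2 \<le> (t - s) * A"
proof (cases "s < t")
  case False
  then have "negligible {s..t}"
    by (intro negligible_atLeastAtMostI) simp
  then have "(u has_integral 0) {s..t}" "(a has_integral 0) {s..t}"
    by (auto intro: has_integral_negligible)
  then show ?thesis
    using has_integral_unique[OF u] has_integral_unique[OF a] by simp
next
  case True
  define \<mu> where "\<mu> = I / (t - s)"
  let ?g = "\<lambda>x. 2 * \<mu> * u x - \<mu>\<^sup>2"
  have "((\<lambda>x. \<mu>\<^sup>2) has_integral \<mu>\<^sup>2 * (t - s)) {s..t}"
    using has_integral_const_real[of "\<mu>\<^sup>2" s t] True by (simp add: mult.commute)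
  then have g: "(?g has_integral 2 * \<mu> * I - \<mu>\<^sup>2 * (t - s)) {s..t}"
    by (intro has_integral_diff has_integral_mult_right u)
  have a': "((\<lambda>x. if x \<in> N then ?g x else a x) has_integral A) {s..t}"
    using a by (rule has_integral_spike[OF N, rotated]) simp
  have "?g x \<le> a x" if "x \<in> {s..t} - N" for x
    using le[OF that] sum_power2_ge_zero[of "u x - \<mu>" 0] by (simp add: power2_diff algebra_simps)
  then have "2 * \<mu> * I - \<mu>\<^sup>2 * (t - s) \<le> A"
    by (intro has_integral_le[OF g a']) auto
  moreover have mu: "\<mu> * (t - s) = I"
    using True by (simp add: \<mu>_def)
  then have "\<mu>\<^sup>2 * (t - s) = \<mu> * I"
    by (metis mult.assoc power2_eq_square)
  ultimately have "(t - s) * (\<mu> * I) \<le> (t - s) * A"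
    using True by (intro mult_left_mono) (auto simp: mult.commute)
  then show ?thesis
    by (metis mu mult.commute mult.left_commute power2_eq_square)
qed

lemma borel_measurable_edge_metric [measurable]: "edge_metric p q \<in> borel_measurable borel"
  unfolding edge_metric_def[abs_def] edge_mean_def by measurable

context
  fixes p q :: real
  assumes pq: "0 < p" "0 < q"
begin

lemma edge_mean_pos: "0 < r \<Longrightarrow> r < 1 \<Longrightarrow> 0 < edge_mean p q r"
  unfolding edge_mean_def using pq by (intro log_mean_pos) auto

lemma edge_mean_nonneg: "0 \<le> r \<Longrightarrow> r \<le> 1 \<Longrightarrow> 0 \<le> edge_mean p q r"
  unfolding edge_mean_def using pq by (intro log_mean_nonneg) auto

lemma isCont_edge_mean: "0 < r \<Longrightarrow> r < 1 \<Longrightarrow> isCont (edge_mean p q) r"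
  unfolding edge_mean_def using pq by (intro continuous_intros) auto

lemma isCont_edge_metric:
  assumes "0 < r" "r < 1"
  shows "isCont (edge_metric p q) r"
  unfolding edge_metric_def using isCont_edge_mean[OF assms] edge_mean_pos[OF assms]
  by (intro continuous_intros) auto

lemma edge_metric_pos: "0 < r \<Longrightarrow> r < 1 \<Longrightarrow> 0 < edge_metric p q r"
  unfolding edge_metric_def using edge_mean_pos by simp

lemma edge_metric_nonneg: "0 \<le> r \<Longrightarrow> r \<le> 1 \<Longrightarrow> 0 \<le> edge_metric p q r"
  unfolding edge_metric_def using edge_mean_nonneg by simp

lemma edge_metric_le:
  assumes "0 \<le> r" "r \<le> 1"
  shows "edge_metric p q r \<le> 1 / sqrt (min p q) * (1 / sqrt r + 1 / sqrt (1 - r))"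
proof (cases "r = 0 \<or> r = 1")
  case True
  then show ?thesis using pq by (auto simp: edge_metric_def edge_mean_def)
next
  case False
  with assms have r: "0 < r" "r < 1" by auto
  have pos: "0 < min p q * min r (1 - r)"
    using pq r by auto
  have "min p q * min r (1 - r) \<le> min (p * r) (q * (1 - r))"
    using pq r by (auto simp: min_def mult_mono)
  also have "\<dots> \<le> edge_mean p q r"
    unfolding edge_mean_def using pq r by (intro log_mean_ge_min) auto
  finally have "1 / sqrt (edge_mean p q r) \<le> 1 / sqrt (min p q * min r (1 - r))"
    using pos by (intro divide_left_mono real_sqrt_le_mono mult_pos_pos) auto
  also have "\<dots> = 1 / sqrt (min p q) * (1 / sqrt (min r (1 - r)))"
    by (simp add: real_sqrt_mult)
  also have "\<dots> \<le> 1 / sqrt (min p q) * (1 / sqrt r + 1 / sqrt (1 - r))"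
    using pq r by (intro mult_left_mono) (auto simp: min_def)
  finally show ?thesis unfolding edge_metric_def .
qed

lemma edge_metric_integrable: "edge_metric p q integrable_on {0..1}"
proof (rule measurable_bounded_by_integrable_imp_integrable_real)
  show "edge_metric p q \<in> borel_measurable (lebesgue_on {0..1})"
    by (intro measurable_restrict_space1 measurable_completion) simp
  show "(\<lambda>r. 1 / sqrt (min p q) * (1 / sqrt r + 1 / sqrt (1 - r))) integrable_on {0..1}"
    using has_integral_mult_right[OF has_integral_inverse_sqrt_endpoints]
    unfolding integrable_on_def by blast
  show "\<bar>edge_metric p q r\<bar> \<le> 1 / sqrt (min p q) * (1 / sqrt r + 1 / sqrt (1 - r))"
    if "r \<in> {0..1}" for r
    using that edge_metric_le edge_metric_nonneg by auto
qed auto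

lemma set_lebesgue_integral_edge_metric:
  "(LINT r:{0..1}|lborel. edge_metric p q r) = edge_arclength p q 1"
proof -
  have "edge_metric p q absolutely_integrable_on {0..1}"
    using edge_metric_integrable edge_metric_nonneg
    by (intro nonnegative_absolutely_integrable_1) auto
  then have "set_integrable lborel {0..1} (edge_metric p q)"
    unfolding set_integrable_def by (subst (asm) integrable_completion) auto
  then show ?thesis
    unfolding edge_arclength_def by (rule set_borel_integral_eq_integral)
qed

lemma edge_arclength_0 [simp]: "edge_arclength p q 0 = 0"
  by (simp add: edge_arclength_def)

lemma continuous_on_edge_arclength: "continuous_on {0..1} (edge_arclength p q)"
  unfolding edge_arclength_def using edge_metric_integrable
  by (rule indefinite_integral_continuous_1)

lemma edge_arclength_deriv:
  assumes "0 < y" "y < 1"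
  shows "(edge_arclength p q has_real_derivative edge_metric p q y) (at y)"
proof -
  have "((\<lambda>u. integral {0..u} (edge_metric p q)) has_vector_derivative edge_metric p q y)
          (at y within {0..1} - {})"
    using assms isCont_edge_metric[OF assms]
    by (intro integral_has_vector_derivative_continuous_at edge_metric_integrable)
       (auto intro: continuous_at_imp_continuous_at_within)
  moreover have "edge_arclength p q = (\<lambda>u. integral {0..u} (edge_metric p q))"
    by (simp add: fun_eq_iff edge_arclength_def)
  ultimately show ?thesis
    using at_within_interior[of y "{0..1}"] assms
    by (simp add: has_real_derivative_iff_has_vector_derivative)
qed

lemma edge_arclength_strict_mono:
  assumes "0 \<le> x" "x < y" "y \<le> 1"
  shows "edge_arclength p q x < edge_arclength p q y"
proof (rule DERIV_pos_imp_increasing_open[OF \<open>x < y\<close>])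
  fix z
  assume "x < z" "z < y"
  with assms show "\<exists>D. (edge_arclength p q has_real_derivative D) (at z) \<and> 0 < D"
    using edge_arclength_deriv edge_metric_pos by (meson le_less_trans less_le_trans)
qed (use assms in \<open>auto intro: continuous_on_subset[OF continuous_on_edge_arclength]\<close>)

lemma edge_arclength_mono:
  "0 \<le> x \<Longrightarrow> x \<le> y \<Longrightarrow> y \<le> 1 \<Longrightarrow> edge_arclength p q x \<le> edge_arclength p q y"
  using edge_arclength_strict_mono[of x y] by (cases "x = y") auto

lemma edge_arclength_1_pos: "0 < edge_arclength p q 1"
  using edge_arclength_strict_mono[of 0 1] by simp

lemma edge_arclength_inj:
  "x \<in> {0..1} \<Longrightarrow> y \<in> {0..1} \<Longrightarrow> edge_arclength p q x = edge_arclength p q y \<Longrightarrow> x = y"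
  using edge_arclength_strict_mono[of x y] edge_arclength_strict_mono[of y x]
  by (cases x y rule: linorder_cases) auto

lemma edge_geodesic:
  assumes "0 \<le> t" "t \<le> 1"
  shows "edge_geodesic p q t \<in> {0..1}"
    and "edge_arclength p q (edge_geodesic p q t) = edge_arclength p q 1 * t"
proof -
  obtain y where y: "0 \<le> y" "y \<le> 1" "edge_arclength p q y = edge_arclength p q 1 * t"
    using IVT'[of "edge_arclength p q" 0 "edge_arclength p q 1 * t" 1] assms
      continuous_on_edge_arclength edge_arclength_1_pos
    by (auto simp: mult_le_cancel_left1)
  then have "edge_geodesic p q t = y"
    unfolding edge_geodesic_def using edge_arclength_inj by (intro the_equality) auto
  with y show "edge_geodesic p q t \<in> {0..1}"
    and "edge_arclength p q (edge_geodesic p q t) = edge_arclength p q 1 * t"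
    by auto
qed

lemma edge_geodesic_arclength:
  assumes y: "y \<in> {0..1}"
  shows "edge_geodesic p q (edge_arclength p q y / edge_arclength p q 1) = y"
proof -
  let ?t = "edge_arclength p q y / edge_arclength p q 1"
  have "0 \<le> edge_arclength p q y" "edge_arclength p q y \<le> edge_arclength p q 1"
    using y edge_arclength_mono[of 0 y] edge_arclength_mono[of y 1] by auto
  then have t: "0 \<le> ?t" "?t \<le> 1"
    using edge_arclength_1_pos by simp_all
  have "edge_arclength p q (edge_geodesic p q ?t) = edge_arclength p q 1 * ?t"
    by (rule edge_geodesic(2)[OF t])
  also have "\<dots> = edge_arclength p q y"
    using edge_arclength_1_pos by simp
  finally show ?thesis
    by (rule edge_arclength_inj[OF edge_geodesic(1)[OF t] y])
qed

lemma edge_geodesic_0 [simp]: "edge_geodesic p q 0 = 0"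
  and edge_geodesic_1 [simp]: "edge_geodesic p q 1 = 1"
  using edge_geodesic_arclength[of 0] edge_geodesic_arclength[of 1] edge_arclength_1_pos
  by auto

lemma edge_geodesic_interior:
  assumes "0 < t" "t < 1"
  shows "0 < edge_geodesic p q t" "edge_geodesic p q t < 1"
proof -
  have m: "edge_geodesic p q t \<in> {0..1}"
    "edge_arclength p q (edge_geodesic p q t) = edge_arclength p q 1 * t"
    using edge_geodesic assms by auto
  then have "edge_geodesic p q t \<noteq> 0" "edge_geodesic p q t \<noteq> 1"
    using assms edge_arclength_1_pos by auto
  with m(1) show "0 < edge_geodesic p q t" "edge_geodesic p q t < 1"
    by auto
qed

lemma continuous_on_edge_geodesic: "continuous_on {0..1} (edge_geodesic p q)"
proof -
  let ?s = "\<lambda>y. edge_arclength p q y / edge_arclength p q 1"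
  have image: "?s ` {0..1} = {0..1}"
  proof
    show "?s ` {0..1} \<subseteq> {0..1}"
    proof
      fix z
      assume "z \<in> ?s ` {0..1}"
      then obtain y where y: "y \<in> {0..1}" "z = ?s y"
        by blast
      then have "0 \<le> edge_arclength p q y" "edge_arclength p q y \<le> edge_arclength p q 1"
        using edge_arclength_mono[of 0 y] edge_arclength_mono[of y 1] by auto
      with y show "z \<in> {0..1}"
        using edge_arclength_1_pos by simp
    qed
    show "{0..1} \<subseteq> ?s ` {0..1}"
    proof
      fix t :: real
      assume t: "t \<in> {0..1}"
      then have "?s (edge_geodesic p q t) = t"
        using edge_geodesic(2)[of t] edge_arclength_1_pos by simp
      with edge_geodesic(1)[of t] t show "t \<in> ?s ` {0..1}"
        by (metis atLeastAtMost_iff image_eqI)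
    qed
  qed
  have "continuous_on {0..1} ?s"
    using continuous_on_edge_arclength edge_arclength_1_pos
    by (intro continuous_on_divide continuous_on_const) auto
  then have "continuous_on (?s ` {0..1}) (edge_geodesic p q)"
    using edge_geodesic_arclength by (intro continuous_on_inv) auto
  with image show ?thesis
    by simp
qed

lemma isCont_edge_geodesic: "0 < t \<Longrightarrow> t < 1 \<Longrightarrow> isCont (edge_geodesic p q) t"
  using continuous_on_interior[OF continuous_on_edge_geodesic] by auto

lemma isCont_edge_mean_geodesic:
  "0 < t \<Longrightarrow> t < 1 \<Longrightarrow> isCont (\<lambda>t. edge_mean p q (edge_geodesic p q t)) t"
  using continuous_at_compose[OF isCont_edge_geodesic isCont_edge_mean] edge_geodesic_interior
  by (simp add: o_def)

lemma edge_geodesic_deriv: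
  assumes "0 < t" "t < 1"
  shows "(edge_geodesic p q has_real_derivative
           edge_arclength p q 1 * sqrt (edge_mean p q (edge_geodesic p q t))) (at t)"
proof -
  let ?L = "edge_arclength p q 1" and ?m = "edge_geodesic p q t"
  note m = edge_geodesic_interior[OF assms]
  have "((\<lambda>y. edge_arclength p q y / ?L) has_real_derivative edge_metric p q ?m / ?L) (at ?m)"
    using edge_arclength_deriv[OF m] edge_arclength_1_pos by (auto intro!: derivative_eq_intros)
  moreover have "edge_metric p q ?m / ?L \<noteq> 0"
    using edge_metric_pos[OF m] edge_arclength_1_pos by simp
  moreover have "edge_arclength p q (edge_geodesic p q y) / ?L = y" if "0 < y" "y < 1" for y
    using edge_geodesic(2)[of y] that edge_arclength_1_pos by simp
  ultimately have "(edge_geodesic p q has_real_derivative inverse (edge_metric p q ?m / ?L)) (at t)"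
    using assms isCont_edge_geodesic[OF assms]
    by (intro DERIV_inverse_function[where a = 0 and b = 1]) auto
  then show ?thesis
    by (simp add: edge_metric_def mult.commute)
qed

lemma edge_geodesic_deriv_potential:
  assumes "0 < t" "t < 1"
  shows "(edge_geodesic p q has_real_derivative
           edge_geodesic_potential p q t * edge_mean p q (edge_geodesic p q t)) (at t)"
proof -
  have "0 < edge_mean p q (edge_geodesic p q t)"
    using edge_mean_pos edge_geodesic_interior assms by blast
  then have "edge_arclength p q 1 * sqrt (edge_mean p q (edge_geodesic p q t))
      = edge_geodesic_potential p q t * edge_mean p q (edge_geodesic p q t)"
    using assms by (simp add: edge_geodesic_potential_def field_simps real_sqrt_mult[symmetric])
  with edge_geodesic_deriv[OF assms] show ?thesis by simp
qed

lemma edge_geodesic_potential_energy: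
  assumes "0 < t" "t < 1"
  shows "(edge_geodesic_potential p q t)\<^sup>2 * edge_mean p q (edge_geodesic p q t) = (edge_arclength p q 1)\<^sup>2"
  using edge_mean_pos[OF edge_geodesic_interior[OF assms]] assms
  by (simp add: edge_geodesic_potential_def power_divide)

lemma borel_measurable_edge_geodesic_potential:
  "edge_geodesic_potential p q \<in> borel_measurable borel"
  unfolding edge_geodesic_potential_def
proof (rule borel_measurable_continuous_on_if)
  have "isCont (\<lambda>t. edge_arclength p q 1 / sqrt (edge_mean p q (edge_geodesic p q t))) t"
    if "0 < t" "t < 1" for t
    using isCont_edge_mean_geodesic[OF that] edge_mean_pos[OF edge_geodesic_interior[OF that]]
    by (intro continuous_intros) auto
  then show "continuous_on {0<..<1} (\<lambda>t. edge_arclength p q 1 / sqrt (edge_mean p q (edge_geodesic p q t)))"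
    by (intro continuous_at_imp_continuous_on) auto
qed auto

lemma edge_geodesic_piecewise_C1: "edge_geodesic p q piecewise_C1_differentiable_on {0..1}"
  unfolding piecewise_C1_differentiable_on_def
proof (intro conjI exI[of _ "{0, 1}"] continuous_on_edge_geodesic)
  have "{0..1} - {0, 1} = {0<..<1::real}"
    by auto
  moreover have "continuous_on {0<..<1}
      (\<lambda>t. edge_arclength p q 1 * sqrt (edge_mean p q (edge_geodesic p q t)))"
    using isCont_edge_mean_geodesic by (intro continuous_at_imp_continuous_on ballI continuous_intros) auto
  ultimately show "edge_geodesic p q C1_differentiable_on {0..1} - {0, 1}"
    unfolding C1_differentiable_on_def using edge_geodesic_deriv
    by (intro exI[of _ "\<lambda>t. edge_arclength p q 1 * sqrt (edge_mean p q (edge_geodesic p q t))"])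
       (auto simp: has_real_derivative_iff_has_vector_derivative[symmetric])
qed auto

lemma edge_arclength_increment_sq_le:
  assumes F: "continuous_on {s..t} F" "\<And>x. x \<in> {s..t} \<Longrightarrow> F x \<in> {0..1}"
      "\<And>x. x \<in> {s<..<t} \<Longrightarrow> F x \<in> {0<..<1}"
    and S: "finite S" and F': "\<And>x. x \<in> {s<..<t} - S \<Longrightarrow> (F has_real_derivative F' x) (at x)"
    and a: "a integrable_on {s..t}" and N: "negligible N"
    and energy: "\<And>x. x \<in> {s<..<t} - S - N \<Longrightarrow> (F' x)\<^sup>2 \<le> a x * edge_mean p q (F x)"
    and "s \<le> t"
  shows "(edge_arclength p q (F t) - edge_arclength p q (F s))\<^sup>2 \<le> (t - s) * integral {s..t} a"
proof (rule has_integral_sq_le[where u = "\<lambda>x. edge_metric p q (F x) * F' x" and N = "N \<union> S \<union> {s, t}",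
      OF _ integrable_integral[OF a]])
  show "((\<lambda>x. edge_metric p q (F x) * F' x) has_integral
          edge_arclength p q (F t) - edge_arclength p q (F s)) {s..t}"
  proof (rule fundamental_theorem_of_calculus_interior_strong[OF S \<open>s \<le> t\<close>])
    show "continuous_on {s..t} (\<lambda>x. edge_arclength p q (F x))"
      using F(2) by (intro continuous_on_compose2[OF continuous_on_edge_arclength F(1)]) auto
    fix x
    assume "x \<in> {s<..<t} - S"
    with F(3)[of x] show "((\<lambda>x. edge_arclength p q (F x)) has_vector_derivative
        edge_metric p q (F x) * F' x) (at x)"
      using DERIV_chain2[OF edge_arclength_deriv F']
      by (simp add: has_real_derivative_iff_has_vector_derivative)
  qed
  show "negligible (N \<union> S \<union> {s, t})"
    using N S by (auto intro: negligible_finite)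
  fix x
  assume "x \<in> {s..t} - (N \<union> S \<union> {s, t})"
  then have x: "x \<in> {s<..<t} - S - N" and h: "0 < edge_mean p q (F x)"
    using F(3)[of x] edge_mean_pos by auto
  have "(edge_metric p q (F x) * F' x)\<^sup>2 = (F' x)\<^sup>2 / edge_mean p q (F x)"
    unfolding edge_metric_def using h by (simp add: power_mult_distrib power_divide)
  also have "\<dots> \<le> a x"
    using energy[OF x] h by (simp add: divide_le_eq)
  finally show "(edge_metric p q (F x) * F' x)\<^sup>2 \<le> a x" .
qed

text \<open>\<open>edge_metric\<close> is singular at \<open>0\<close> and \<open>1\<close>, so the curve is first restricted to an
  interval on which it stays in \<open>[d, 1 - d]\<close>; then \<open>d \<rightarrow> 0\<close>.\<close>

lemma edge_arclength_gap_sq_le_energy: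
  assumes F: "continuous_on {0..1} F" "F 0 = 0" "F 1 = 1" "\<And>x. x \<in> {0..1} \<Longrightarrow> F x \<in> {0..1}"
    and S: "finite S" and F': "\<And>x. x \<in> {0<..<1} - S \<Longrightarrow> (F has_real_derivative F' x) (at x)"
    and a: "(a has_integral A) {0..1}" "\<And>x. x \<in> {0..1} \<Longrightarrow> 0 \<le> a x"
    and N: "negligible N"
    and energy: "\<And>x. x \<in> {0<..<1} - S - N \<Longrightarrow> (F' x)\<^sup>2 \<le> a x * edge_mean p q (F x)"
    and d: "0 < d" "d < 1/2"
  shows "(edge_arclength p q (1 - d) - edge_arclength p q d)\<^sup>2 \<le> A"
proof -
  let ?G = "edge_arclength p q"
  obtain s t where st: "0 \<le> s" "s < t" "t \<le> 1" "F s \<le> d" "1 - d \<le> F t"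
    and inside: "\<And>x. s < x \<Longrightarrow> x < t \<Longrightarrow> d < F x \<and> F x < 1 - d"
    using crossing_interval[OF F(1), of d "1 - d"] F d by auto
  have a_st: "a integrable_on {s..t}"
    using a st by (intro integrable_on_subinterval[OF has_integral_integrable]) auto
  have "(?G (F t) - ?G (F s))\<^sup>2 \<le> (t - s) * integral {s..t} a"
  proof (rule edge_arclength_increment_sq_le[where F' = F', OF _ _ _ S _ a_st N])
    show "continuous_on {s..t} F"
      using st by (intro continuous_on_subset[OF F(1)]) auto
    show "F x \<in> {0<..<1}" if "x \<in> {s<..<t}" for x
      using inside[of x] that d by auto
  qed (use st F(4) F' energy in auto)
  also have "\<dots> \<le> 1 * A"
  proof (rule mult_mono)
    show "integral {s..t} a \<le> A"
      using integral_subset_le[of "{s..t}" "{0..1}" a] a st a_st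
      by (auto simp: integral_unique has_integral_integrable)
  qed (use st a a_st in \<open>auto intro: integral_nonneg has_integral_nonneg\<close>)
  moreover have "0 \<le> ?G (1 - d) - ?G d" "?G (1 - d) - ?G d \<le> ?G (F t) - ?G (F s)"
    using edge_arclength_mono[of d "1 - d"] edge_arclength_mono[of "1 - d" "F t"]
      edge_arclength_mono[of "F s" d] F(4)[of s] F(4)[of t] st d
    by auto
  ultimately show ?thesis
    by (smt (verit) power_mono)
qed

lemma edge_arclength_sq_le_energy:
  assumes F: "continuous_on {0..1} F" "F 0 = 0" "F 1 = 1" "\<And>x. x \<in> {0..1} \<Longrightarrow> F x \<in> {0..1}"
    and S: "finite S" and F': "\<And>x. x \<in> {0<..<1} - S \<Longrightarrow> (F has_real_derivative F' x) (at x)"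
    and a: "(a has_integral A) {0..1}" "\<And>x. x \<in> {0..1} \<Longrightarrow> 0 \<le> a x"
    and N: "negligible N"
    and energy: "\<And>x. x \<in> {0<..<1} - S - N \<Longrightarrow> (F' x)\<^sup>2 \<le> a x * edge_mean p q (F x)"
  shows "(edge_arclength p q 1)\<^sup>2 \<le> A"
proof -
  let ?f = "\<lambda>d. (edge_arclength p q (1 - d) - edge_arclength p q d)\<^sup>2"
  have "continuous_on {0..1/2} ?f"
    by (intro continuous_intros continuous_on_compose2[OF continuous_on_edge_arclength]
        continuous_on_subset[OF continuous_on_edge_arclength]) auto
  then have "(?f \<longlongrightarrow> (edge_arclength p q 1)\<^sup>2) (at_right 0)"
    using continuous_on_Icc_at_rightD[of 0 "1/2" ?f] pq by simp
  moreover have "eventually (\<lambda>d. ?f d \<le> A) (at_right 0)"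
    unfolding eventually_at_right_field
    by (rule exI[of _ "1/2"]) (auto intro!: edge_arclength_gap_sq_le_energy[OF assms])
  ultimately show ?thesis
    by (rule tendsto_upperbound) simp
qed

end

section \<open>Flux through an edge of the chain\<close>

definition outflow ::
  "nat \<Rightarrow> (nat \<Rightarrow> nat \<Rightarrow> real) \<Rightarrow> (nat \<Rightarrow> real) \<Rightarrow> (nat \<Rightarrow> real) \<Rightarrow> nat \<Rightarrow> real" where
  "outflow n K Q \<psi> j = (\<Sum>k<n. (\<psi> k - \<psi> j) * K j k * log_mean (Q j) (Q k))"

definition action_density ::
  "nat \<Rightarrow> (nat \<Rightarrow> nat \<Rightarrow> real) \<Rightarrow> (nat \<Rightarrow> real) \<Rightarrow> (nat \<Rightarrow> real) \<Rightarrow> (nat \<Rightarrow> real) \<Rightarrow> real" where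
  "action_density n K \<pi> Q \<psi> =
     (1/2) * (\<Sum>j<n. \<Sum>k<n. (\<psi> j - \<psi> k)\<^sup>2 * K j k * log_mean (Q j) (Q k) * \<pi> j)"

definition edge_interpolant :: "(nat \<Rightarrow> real) \<Rightarrow> nat \<Rightarrow> real \<Rightarrow> nat \<Rightarrow> real" where
  "edge_interpolant \<pi> i x j = (1 - x) * (unit_vec i j / \<pi> j) + x * (unit_vec (i + 1) j / \<pi> j)"

lemma sum_eq_single:
  "finite A \<Longrightarrow> a \<in> A \<Longrightarrow> (\<And>k. k \<in> A \<Longrightarrow> k \<noteq> a \<Longrightarrow> f k = 0) \<Longrightarrow> sum f A = f a"
  using sum.mono_neutral_right[of A "{a}" f] by auto

lemma sum_antisym_eq_0:
  fixes f :: "'a \<Rightarrow> 'a \<Rightarrow> real"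
  assumes antisym: "\<And>j k. j \<in> A \<Longrightarrow> k \<in> A \<Longrightarrow> f k j = - f j k"
  shows "(\<Sum>j\<in>A. \<Sum>k\<in>A. f j k) = 0"
proof -
  have "(\<Sum>j\<in>A. \<Sum>k\<in>A. f j k) = (\<Sum>k\<in>A. \<Sum>j\<in>A. f j k)"
    by (rule sum.swap)
  also have "\<dots> = (\<Sum>k\<in>A. \<Sum>j\<in>A. - f k j)"
    by (intro sum.cong refl antisym)
  also have "\<dots> = - (\<Sum>j\<in>A. \<Sum>k\<in>A. f j k)"
    by (simp add: sum_negf)
  finally show ?thesis
    by simp
qed

text \<open>Summation by parts on the graph, using detailed balance.\<close>

lemma action_density_eq_outflow:
  assumes db: "\<And>j k. j < n \<Longrightarrow> k < n \<Longrightarrow> \<pi> j * K j k = \<pi> k * K k j"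
  shows "action_density n K \<pi> Q \<psi> = - (\<Sum>j<n. \<pi> j * \<psi> j * outflow n K Q \<psi> j)"
proof -
  define w where "w j k = \<pi> j * K j k * log_mean (Q j) (Q k)" for j k
  have w_sym: "w k j = w j k" if "j < n" "k < n" for j k
    using db[OF that] unfolding w_def by (simp add: log_mean_commute)
  have S: "(\<Sum>j<n. \<pi> j * \<psi> j * outflow n K Q \<psi> j) = (\<Sum>j<n. \<Sum>k<n. w j k * \<psi> j * (\<psi> k - \<psi> j))"
    unfolding outflow_def w_def by (simp add: sum_distrib_left algebra_simps)
  have "(\<Sum>j<n. \<Sum>k<n. w j k * \<psi> j * (\<psi> k - \<psi> j)) = (\<Sum>k<n. \<Sum>j<n. w j k * \<psi> j * (\<psi> k - \<psi> j))"
    by (rule sum.swap)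
  also have "\<dots> = (\<Sum>j<n. \<Sum>k<n. w j k * \<psi> k * (\<psi> j - \<psi> k))"
    by (intro sum.cong refl) (simp add: w_sym)
  finally have "2 * (\<Sum>j<n. \<pi> j * \<psi> j * outflow n K Q \<psi> j) =
      (\<Sum>j<n. \<Sum>k<n. w j k * \<psi> j * (\<psi> k - \<psi> j)) + (\<Sum>j<n. \<Sum>k<n. w j k * \<psi> k * (\<psi> j - \<psi> k))"
    unfolding S by simp
  also have "\<dots> = (\<Sum>j<n. \<Sum>k<n. - ((\<psi> j - \<psi> k)\<^sup>2 * K j k * log_mean (Q j) (Q k) * \<pi> j))"
    unfolding sum.distrib[symmetric] w_def by (intro sum.cong refl) (simp add: power2_eq_square algebra_simps)
  also have "\<dots> = - (\<Sum>j<n. \<Sum>k<n. (\<psi> j - \<psi> k)\<^sup>2 * K j k * log_mean (Q j) (Q k) * \<pi> j)"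
    by (simp add: sum_negf)
  finally show ?thesis
    unfolding action_density_def by simp
qed

lemma action_density_nonneg:
  assumes "row_stochastic n K" "\<And>j. j < n \<Longrightarrow> 0 \<le> \<pi> j" "\<And>j. j < n \<Longrightarrow> 0 \<le> Q j"
  shows "0 \<le> action_density n K \<pi> Q \<psi>"
  unfolding action_density_def using assms
  by (auto intro!: sum_nonneg mult_nonneg_nonneg log_mean_nonneg simp: row_stochastic_def)

lemma tridiagonal_irreducible_edge_pos:
  assumes tri: "tridiagonal n K" and irr: "irreducible_mat n K" and rs: "row_stochastic n K"
    and rev: "reversible_wrt n K \<pi>" and i: "i + 1 < n"
  shows "0 < K i (i+1)" "0 < K (i+1) i"
proof -
  let ?E = "{(a, b). a < n \<and> b < n \<and> 0 < K a b}"
  have "b \<le> i" if "(a, b) \<in> ?E\<^sup>*" "a \<le> i" and no_edge: "K i (i+1) = 0" for a b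
    using that(1,2)
  proof (induction rule: rtrancl_induct)
    case (step b c)
    then have "c \<le> b + 1" "b < n" "c < n" "0 < K b c"
      using tri unfolding tridiagonal_def by (auto simp: not_less[symmetric])
    with step no_edge show ?case
      by (cases "b = i") (auto simp: not_less_eq_eq le_Suc_eq)
  qed simp
  moreover have "(i, i+1) \<in> ?E\<^sup>*"
    using irr i unfolding irreducible_mat_def by auto
  moreover have "0 \<le> K i (i+1)"
    using rs i unfolding row_stochastic_def by auto
  ultimately show q: "0 < K i (i+1)"
    by fastforce
  have "\<pi> i * K i (i+1) = \<pi> (i+1) * K (i+1) i" "0 < \<pi> i" "0 < \<pi> (i+1)"
    using rev i unfolding reversible_wrt_def by auto
  with q show "0 < K (i+1) i"
    by (metis mult_pos_pos zero_less_mult_pos)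
qed

lemma tridiagonal_sum_crossing:
  assumes tri: "tridiagonal n K" and i: "i + 1 < n"
    and f: "\<And>j k. K j k = 0 \<Longrightarrow> f j k = 0"
  shows "(\<Sum>j\<in>{i+1..<n}. \<Sum>k<i+1. f j k) = f (i+1) i"
proof -
  have zero: "f j k = 0" if "j \<in> {i+1..<n}" "k < i + 1" "(j, k) \<noteq> (i+1, i)" for j k
  proof -
    have "k + 1 < j" "j < n" using that by auto
    then show ?thesis
      using tri f unfolding tridiagonal_def by auto
  qed
  have "(\<Sum>k<i+1. f j k) = (if j = i + 1 then f (i+1) i else 0)" if "j \<in> {i+1..<n}" for j
  proof (cases "j = i + 1")
    case True
    then show ?thesis
      using that zero by (subst sum_eq_single[of _ i]) auto
  next
    case False
    then have "(\<Sum>k<i+1. f j k) = 0"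
      using that zero by (intro sum.neutral) auto
    with False show ?thesis
      by simp
  qed
  then show ?thesis
    using i by (simp add: sum.delta)
qed

text \<open>In a tridiagonal chain the only edge leaving \<open>{i+1..<n}\<close> is \<open>(i+1, i)\<close>; the flows
  inside \<open>{i+1..<n}\<close> cancel in pairs.\<close>

lemma tridiagonal_outflow_tail:
  assumes tri: "tridiagonal n K"
    and db: "\<And>j k. j < n \<Longrightarrow> k < n \<Longrightarrow> \<pi> j * K j k = \<pi> k * K k j"
    and i: "i + 1 < n"
  shows "(\<Sum>j\<in>{i+1..<n}. \<pi> j * outflow n K Q \<psi> j)
           = \<pi> i * K i (i+1) * (\<psi> i - \<psi> (i+1)) * log_mean (Q i) (Q (i+1))"
proof -
  define f where "f j k = (\<pi> j * K j k) * (\<psi> k - \<psi> j) * log_mean (Q j) (Q k)" for j k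
  have f_swap: "f k j = - f j k" if "j < n" "k < n" for j k
  proof -
    have "f k j = (\<pi> j * K j k) * (\<psi> j - \<psi> k) * log_mean (Q j) (Q k)"
      unfolding f_def db[OF that] by (simp add: log_mean_commute)
    then show ?thesis
      unfolding f_def by (simp add: algebra_simps)
  qed
  have inside: "(\<Sum>j\<in>{i+1..<n}. \<Sum>k\<in>{i+1..<n}. f j k) = 0"
    by (intro sum_antisym_eq_0 f_swap) auto
  have leaving: "(\<Sum>j\<in>{i+1..<n}. \<Sum>k<i+1. f j k) = f (i+1) i"
    using tri i by (rule tridiagonal_sum_crossing) (simp add: f_def)
  have "\<pi> j * outflow n K Q \<psi> j = (\<Sum>k<i+1. f j k) + (\<Sum>k\<in>{i+1..<n}. f j k)" if "j < n" for j
  proof -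
    have split: "{..<n} = {..<i+1} \<union> {i+1..<n}"
      using i by auto
    have "(\<Sum>k<n. f j k) = (\<Sum>k<i+1. f j k) + (\<Sum>k\<in>{i+1..<n}. f j k)"
      unfolding split by (rule sum.union_disjoint) auto
    moreover have "\<pi> j * outflow n K Q \<psi> j = (\<Sum>k<n. f j k)"
      unfolding outflow_def f_def sum_distrib_left by (simp add: mult_ac)
    ultimately show ?thesis
      by simp
  qed
  then have "(\<Sum>j\<in>{i+1..<n}. \<pi> j * outflow n K Q \<psi> j) = f (i+1) i"
    using inside leaving by (simp add: sum.distrib)
  also have "\<dots> = \<pi> i * K i (i+1) * (\<psi> i - \<psi> (i+1)) * log_mean (Q i) (Q (i+1))"
    using db[of i "i+1"] i unfolding f_def by (simp add: log_mean_commute)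
  finally show ?thesis .
qed

lemma action_density_ge_edge:
  assumes Knn: "\<And>j k. j < n \<Longrightarrow> k < n \<Longrightarrow> 0 \<le> K j k"
    and \<pi>nn: "\<And>j. j < n \<Longrightarrow> 0 \<le> \<pi> j"
    and db: "\<pi> i * K i (i+1) = \<pi> (i+1) * K (i+1) i"
    and Qnn: "\<And>j. j < n \<Longrightarrow> 0 \<le> Q j"
    and i: "i + 1 < n"
  shows "\<pi> i * K i (i+1) * (\<psi> (i+1) - \<psi> i)\<^sup>2 * log_mean (Q i) (Q (i+1)) \<le> action_density n K \<pi> Q \<psi>"
proof -
  define T where "T j k = (\<psi> j - \<psi> k)\<^sup>2 * K j k * log_mean (Q j) (Q k) * \<pi> j" for j k
  define E where "E = \<pi> i * K i (i+1) * (\<psi> (i+1) - \<psi> i)\<^sup>2 * log_mean (Q i) (Q (i+1))"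
  have "T j k \<ge> 0" if "j < n" "k < n" for j k
    unfolding T_def using that Knn \<pi>nn Qnn by (intro mult_nonneg_nonneg log_mean_nonneg) auto
  then have "(\<Sum>(j, k)\<in>{(i, i+1), (i+1, i)}. T j k) \<le> (\<Sum>(j, k)\<in>{..<n} \<times> {..<n}. T j k)"
    using i by (intro sum_mono2) auto
  then have "T i (i+1) + T (i+1) i \<le> (\<Sum>j<n. \<Sum>k<n. T j k)"
    by (simp add: sum.cartesian_product)
  moreover have "T i (i+1) = E"
    unfolding T_def E_def by (simp add: power2_commute)
  moreover have "T (i+1) i = (\<pi> (i+1) * K (i+1) i) * (\<psi> (i+1) - \<psi> i)\<^sup>2 * log_mean (Q i) (Q (i+1))"
    unfolding T_def by (simp add: log_mean_commute)
  then have "T (i+1) i = E"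
    unfolding E_def db .
  moreover have "action_density n K \<pi> Q \<psi> = (1/2) * (\<Sum>j<n. \<Sum>k<n. T j k)"
    unfolding action_density_def T_def ..
  ultimately show ?thesis
    unfolding E_def[symmetric] by linarith
qed

lemma prob_density_tail_bounds:
  assumes "prob_density n \<pi> Q" "\<And>j. j < n \<Longrightarrow> 0 < \<pi> j" "i + 1 < n"
  defines "r \<equiv> \<Sum>j\<in>{i+1..<n}. \<pi> j * Q j"
  shows "\<pi> i * Q i \<le> 1 - r" "\<pi> (i+1) * Q (i+1) \<le> r" "0 \<le> r" "r \<le> 1"
proof -
  have nn: "0 \<le> \<pi> j * Q j" if "j < n" for j
    using assms(1,2) that unfolding prob_density_def by (simp add: less_imp_le)
  have split: "{..<n} = {..<i+1} \<union> {i+1..<n}"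
    using assms(3) by auto
  have "(\<Sum>j<n. \<pi> j * Q j) = 1"
    using assms(1) unfolding prob_density_def by (simp add: mult.commute)
  moreover have "(\<Sum>j<n. \<pi> j * Q j) = (\<Sum>j<i+1. \<pi> j * Q j) + r"
    unfolding split r_def by (rule sum.union_disjoint) auto
  ultimately have "(\<Sum>j<i+1. \<pi> j * Q j) + r = 1"
    by simp
  moreover have "\<pi> i * Q i \<le> (\<Sum>j<i+1. \<pi> j * Q j)"
    using nn assms(3) by (intro member_le_sum) auto
  moreover have "\<pi> (i+1) * Q (i+1) \<le> r"
    unfolding r_def using nn assms(3) by (intro member_le_sum) auto
  moreover have "0 \<le> \<pi> i * Q i" "0 \<le> \<pi> (i+1) * Q (i+1)"
    using nn assms(3) by auto
  ultimately show "\<pi> i * Q i \<le> 1 - r" "\<pi> (i+1) * Q (i+1) \<le> r" "0 \<le> r" "r \<le> 1"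
    by linarith+
qed

lemma tridiagonal_outflow_tail_sq_le:
  assumes tri: "tridiagonal n K" and rs: "row_stochastic n K" and rev: "reversible_wrt n K \<pi>"
    and i: "i + 1 < n" and q: "0 < K i (i+1)"
    and dens: "prob_density n \<pi> Q"
  defines "r \<equiv> \<Sum>j\<in>{i+1..<n}. \<pi> j * Q j"
  shows "(\<Sum>j\<in>{i+1..<n}. \<pi> j * outflow n K Q \<psi> j)\<^sup>2
           \<le> action_density n K \<pi> Q \<psi> * edge_mean (K (i+1) i) (K i (i+1)) r"
proof -
  have db: "\<And>j k. j < n \<Longrightarrow> k < n \<Longrightarrow> \<pi> j * K j k = \<pi> k * K k j"
    and \<pi>pos: "\<And>j. j < n \<Longrightarrow> 0 < \<pi> j"
    using rev unfolding reversible_wrt_def by auto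
  have Qnn: "\<And>j. j < n \<Longrightarrow> 0 \<le> Q j"
    using dens unfolding prob_density_def by auto
  have left: "\<pi> i * Q i \<le> 1 - r" and right: "\<pi> (i+1) * Q (i+1) \<le> r"
    unfolding r_def using prob_density_tail_bounds[OF dens \<pi>pos i] by auto
  have Knn: "\<And>j k. j < n \<Longrightarrow> k < n \<Longrightarrow> 0 \<le> K j k"
    using rs unfolding row_stochastic_def by auto
  define c where "c = \<pi> i * K i (i+1)"
  define B where "B = log_mean (Q i) (Q (i+1))"
  have c: "0 < c"
    unfolding c_def using \<pi>pos[of i] i q by simp
  have B: "0 \<le> B"
    unfolding B_def using Qnn i by (intro log_mean_nonneg) auto
  have edge: "c * (\<psi> (i+1) - \<psi> i)\<^sup>2 * B \<le> action_density n K \<pi> Q \<psi>"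
    unfolding c_def B_def using Knn \<pi>pos db[of i "i+1"] Qnn i
    by (intro action_density_ge_edge) (auto simp: less_imp_le)
  have "c * B = log_mean (K i (i+1) * (\<pi> i * Q i)) (K (i+1) i * (\<pi> (i+1) * Q (i+1)))"
    unfolding B_def c_def using db[of i "i+1"] i c log_mean_mult[OF c, of "Q i" "Q (i+1)"]
    by (simp add: c_def algebra_simps)
  also have "\<dots> \<le> log_mean (K i (i+1) * (1 - r)) (K (i+1) i * r)"
    using left right Knn[of i "i+1"] Knn[of "i+1" i] \<pi>pos[of i] \<pi>pos[of "i+1"] Qnn[of i] Qnn[of "i+1"] i
    by (intro log_mean_mono mult_left_mono) auto
  finally have cB: "c * B \<le> edge_mean (K (i+1) i) (K i (i+1)) r"
    unfolding edge_mean_def by (simp add: log_mean_commute)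
  have flux: "(\<Sum>j\<in>{i+1..<n}. \<pi> j * outflow n K Q \<psi> j) = c * (\<psi> i - \<psi> (i+1)) * B"
    unfolding c_def B_def by (rule tridiagonal_outflow_tail[OF tri db i])
  have "(\<Sum>j\<in>{i+1..<n}. \<pi> j * outflow n K Q \<psi> j)\<^sup>2 = (c * (\<psi> (i+1) - \<psi> i)\<^sup>2 * B) * (c * B)"
    unfolding flux by (simp add: power2_eq_square algebra_simps)
  also have "\<dots> \<le> action_density n K \<pi> Q \<psi> * edge_mean (K (i+1) i) (K i (i+1)) r"
    using edge cB c B by (intro mult_mono) (auto intro: order_trans[rotated, OF edge])
  finally show ?thesis .
qed

lemma edge_interpolant_affine:
  "edge_interpolant \<pi> i x j = unit_vec i j / \<pi> j + (unit_vec (i+1) j / \<pi> j - unit_vec i j / \<pi> j) * x"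
  by (cases "\<pi> j = 0") (simp_all add: edge_interpolant_def field_simps)

lemma edge_interpolant_nonneg:
  "0 < \<pi> i \<Longrightarrow> 0 < \<pi> (i+1) \<Longrightarrow> 0 \<le> x \<Longrightarrow> x \<le> 1 \<Longrightarrow> 0 \<le> edge_interpolant \<pi> i x j"
  by (auto simp: edge_interpolant_def unit_vec_def intro: divide_nonneg_pos)

lemma prob_density_edge_interpolant:
  assumes "\<And>j. j < n \<Longrightarrow> 0 < \<pi> j" "i + 1 < n" "0 \<le> x" "x \<le> 1"
  shows "prob_density n \<pi> (edge_interpolant \<pi> i x)"
proof -
  have \<pi>: "0 < \<pi> i" "0 < \<pi> (i+1)"
    using assms(1,2) by auto
  have "(\<Sum>j<n. edge_interpolant \<pi> i x j * \<pi> j) = (\<Sum>j<n. (1 - x) * unit_vec i j + x * unit_vec (i+1) j)"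
    using \<pi> by (intro sum.cong) (auto simp: edge_interpolant_def unit_vec_def)
  also have "\<dots> = 1"
    using assms(2) by (simp add: sum.distrib sum_distrib_left[symmetric] unit_vec_def)
  moreover have "0 \<le> edge_interpolant \<pi> i x j" for j
    using \<pi> assms(3,4) by (rule edge_interpolant_nonneg)
  ultimately show ?thesis
    unfolding prob_density_def by auto
qed

lemma edge_interpolant_log_mean:
  assumes rev: "reversible_wrt n K \<pi>" and i: "i + 1 < n" and q: "0 < K i (i+1)"
  shows "\<pi> i * K i (i+1) * log_mean (edge_interpolant \<pi> i x i) (edge_interpolant \<pi> i x (i+1))
           = edge_mean (K (i+1) i) (K i (i+1)) x"
proof -
  let ?Q = "edge_interpolant \<pi> i x"
  have db: "\<pi> i * K i (i+1) = \<pi> (i+1) * K (i+1) i" and \<pi>: "0 < \<pi> i" "0 < \<pi> (i+1)"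
    using rev i unfolding reversible_wrt_def by auto
  have Q: "?Q i = (1 - x) / \<pi> i" "?Q (i+1) = x / \<pi> (i+1)"
    by (simp_all add: edge_interpolant_def unit_vec_def)
  have c: "0 < \<pi> i * K i (i+1)"
    using \<pi> q by simp
  have "\<pi> i * K i (i+1) * log_mean (?Q i) (?Q (i+1))
      = log_mean (\<pi> i * K i (i+1) * ?Q i) (\<pi> i * K i (i+1) * ?Q (i+1))"
    by (rule log_mean_mult[OF c, symmetric])
  also have "\<pi> i * K i (i+1) * ?Q i = K i (i+1) * (1 - x)"
    using \<pi> by (simp add: Q)
  also have "\<pi> i * K i (i+1) * ?Q (i+1) = K (i+1) i * x"
    unfolding Q db using \<pi> by simp
  finally show ?thesis
    by (simp add: edge_mean_def log_mean_commute mult.commute)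
qed

lemma outflow_edge_interpolant:
  assumes rev: "reversible_wrt n K \<pi>" and i: "i + 1 < n" and q: "0 < K i (i+1)"
  shows "outflow n K (edge_interpolant \<pi> i x) (\<lambda>k. \<phi> * unit_vec (i+1) k) j
           = (unit_vec i j - unit_vec (i+1) j) / \<pi> j * \<phi> * edge_mean (K (i+1) i) (K i (i+1)) x"
proof -
  let ?Q = "edge_interpolant \<pi> i x" and ?h = "edge_mean (K (i+1) i) (K i (i+1)) x"
  have db: "\<pi> i * K i (i+1) = \<pi> (i+1) * K (i+1) i" and \<pi>: "0 < \<pi> i" "0 < \<pi> (i+1)"
    using rev i unfolding reversible_wrt_def by auto
  have Q0: "k \<noteq> i \<Longrightarrow> k \<noteq> i + 1 \<Longrightarrow> ?Q k = 0" for k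
    by (simp add: edge_interpolant_def unit_vec_def)
  note h = edge_interpolant_log_mean[OF rev i q, of x]
  consider "j = i" | "j = i + 1" | "j \<noteq> i" "j \<noteq> i + 1" by blast
  then show ?thesis
  proof cases
    case 1
    have "outflow n K ?Q (\<lambda>k. \<phi> * unit_vec (i+1) k) j = \<phi> * (K i (i+1) * log_mean (?Q i) (?Q (i+1)))"
      unfolding outflow_def 1 using i
      by (subst sum_eq_single[of _ "i+1"]) (auto simp: unit_vec_def)
    with 1 h \<pi> show ?thesis
      by (simp add: unit_vec_def field_simps)
  next
    case 2
    have "outflow n K ?Q (\<lambda>k. \<phi> * unit_vec (i+1) k) j = - \<phi> * (K (i+1) i * log_mean (?Q (i+1)) (?Q i))"
      unfolding outflow_def 2 using i
      by (subst sum_eq_single[of _ i]) (auto simp: unit_vec_def Q0)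
    moreover have "\<pi> (i+1) * (K (i+1) i * log_mean (?Q (i+1)) (?Q i)) = ?h"
      using h unfolding db by (simp add: log_mean_commute mult_ac)
    ultimately show ?thesis
      using 2 \<pi> by (simp add: unit_vec_def field_simps)
  next
    case 3
    then show ?thesis
      by (simp add: outflow_def unit_vec_def Q0)
  qed
qed

lemma action_density_edge_interpolant:
  assumes rev: "reversible_wrt n K \<pi>" and i: "i + 1 < n" and q: "0 < K i (i+1)"
  shows "action_density n K \<pi> (edge_interpolant \<pi> i x) (\<lambda>k. \<phi> * unit_vec (i+1) k)
           = \<phi>\<^sup>2 * edge_mean (K (i+1) i) (K i (i+1)) x"
proof -
  let ?Q = "edge_interpolant \<pi> i x" and ?\<psi> = "\<lambda>k. \<phi> * unit_vec (i+1) k"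
  have db: "\<And>j k. j < n \<Longrightarrow> k < n \<Longrightarrow> \<pi> j * K j k = \<pi> k * K k j" and \<pi>: "0 < \<pi> (i+1)"
    using rev i unfolding reversible_wrt_def by auto
  have "action_density n K \<pi> ?Q ?\<psi> = - (\<Sum>j<n. \<pi> j * ?\<psi> j * outflow n K ?Q ?\<psi> j)"
    by (rule action_density_eq_outflow[OF db])
  also have "\<dots> = - (\<pi> (i+1) * \<phi> * outflow n K ?Q ?\<psi> (i+1))"
    using i by (subst sum_eq_single[of _ "i+1"]) (auto simp: unit_vec_def)
  also have "\<dots> = \<phi>\<^sup>2 * edge_mean (K (i+1) i) (K i (i+1)) x"
    unfolding outflow_edge_interpolant[OF rev i q] using \<pi> by (simp add: unit_vec_def power2_eq_square)
  finally show ?thesis .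
qed

section \<open>Admissible paths\<close>

lemma admissible_path_altdef:
  "admissible_path n K \<pi> Q0 Q1 Q \<psi> \<longleftrightarrow>
     (\<forall>j<n. (\<lambda>\<tau>. Q \<tau> j) piecewise_C1_differentiable_on {0..1}) \<and>
     (\<forall>\<tau>\<in>{0..1}. prob_density n \<pi> (Q \<tau>)) \<and>
     (\<forall>j<n. (\<lambda>\<tau>. \<psi> \<tau> j) \<in> borel_measurable lborel) \<and>
     (AE \<tau> in lborel. \<tau> \<in> {0..1} \<longrightarrow>
        (\<forall>j<n. ((\<lambda>t. Q t j) has_real_derivative - outflow n K (Q \<tau>) (\<psi> \<tau>) j) (at \<tau>))) \<and>
     (\<forall>j<n. Q 0 j = Q0 j \<and> Q 1 j = Q1 j)"
  by (simp add: admissible_path_def outflow_def)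

lemma action_eq_set_nn_integral:
  "action n K \<pi> Q \<psi> = (\<integral>\<^sup>+\<tau>\<in>{0..1}. ennreal (action_density n K \<pi> (Q \<tau>) (\<psi> \<tau>)) \<partial>lborel)"
  by (simp add: action_def action_density_def)

lemma piecewise_C1_differentiable_sum:
  fixes f :: "'i \<Rightarrow> real \<Rightarrow> real"
  assumes "\<And>j. j \<in> J \<Longrightarrow> f j piecewise_C1_differentiable_on S"
  shows "(\<lambda>x. \<Sum>j\<in>J. f j x) piecewise_C1_differentiable_on S"
  using assms
proof (induction J rule: infinite_finite_induct)
  case (insert j J)
  then show ?case
    by (simp add: piecewise_C1_differentiable_add)
qed (auto intro: piecewise_C1_differentiable_const)

lemma piecewise_C1_differentiable_on_realE:
  fixes f :: "real \<Rightarrow> real"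
  assumes "f piecewise_C1_differentiable_on S"
  obtains T f' where "finite T" "\<And>x. x \<in> S - T \<Longrightarrow> (f has_real_derivative f' x) (at x)"
proof -
  obtain T D where "finite T" "\<forall>x\<in>S - T. (f has_vector_derivative D x) (at x)"
    using assms unfolding piecewise_C1_differentiable_on_def C1_differentiable_on_def by blast
  then show thesis
    by (intro that[of T D]) (auto simp: has_real_derivative_iff_has_vector_derivative)
qed

lemma set_nn_integral_eq_ennreal_imp_has_integral:
  fixes a :: "'a::euclidean_space \<Rightarrow> real"
  assumes "a \<in> borel_measurable (lebesgue_on S)" "S \<in> sets lebesgue"
    and "\<And>x. x \<in> S \<Longrightarrow> 0 \<le> a x"
    and "(\<integral>\<^sup>+x\<in>S. ennreal (a x) \<partial>lborel) = ennreal A" "0 \<le> A"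
  shows "(a has_integral A) S"
proof -
  let ?f = "\<lambda>x. if x \<in> S then a x else 0"
  have "(\<integral>\<^sup>+x. ennreal (?f x) \<partial>lebesgue) = ennreal A"
    using assms(4) unfolding nn_integral_completion
    by (subst nn_integral_cong[where v = "\<lambda>x. ennreal (a x) * indicator S x"]) (auto simp: indicator_def)
  then have "(?f has_integral A) UNIV"
    using has_integral_iff_nn_integral_lebesgue[of ?f A] borel_measurable_if_I[OF assms(1,2)] assms(3,5)
    by auto
  then show ?thesis
    by (simp add: has_integral_restrict_UNIV)
qed

lemma admissible_path_action_density_measurable:
  assumes "admissible_path n K \<pi> Q0 Q1 Q \<psi>"
  shows "(\<lambda>\<tau>. action_density n K \<pi> (Q \<tau>) (\<psi> \<tau>)) \<in> borel_measurable (lebesgue_on {0..1})"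
proof -
  have meas: "(\<lambda>\<tau>. Q \<tau> j) \<in> borel_measurable (lebesgue_on {0..1})"
    "(\<lambda>\<tau>. \<psi> \<tau> j) \<in> borel_measurable (lebesgue_on {0..1})" if "j < n" for j
  proof -
    have "continuous_on {0..1} (\<lambda>\<tau>. Q \<tau> j)" and \<psi>: "(\<lambda>\<tau>. \<psi> \<tau> j) \<in> borel_measurable lborel"
      using assms that unfolding admissible_path_def piecewise_C1_differentiable_on_def by auto
    then show "(\<lambda>\<tau>. Q \<tau> j) \<in> borel_measurable (lebesgue_on {0..1})"
      by (intro continuous_imp_measurable_on_sets_lebesgue) auto
    show "(\<lambda>\<tau>. \<psi> \<tau> j) \<in> borel_measurable (lebesgue_on {0..1})"
      using \<psi> by (intro measurable_restrict_space1 measurable_completion)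
  qed
  show ?thesis
    unfolding action_density_def
  proof (rule borel_measurable_times[OF borel_measurable_const], rule borel_measurable_sum,
      rule borel_measurable_sum)
    fix j k
    assume "j \<in> {..<n}" "k \<in> {..<n}"
    then have [measurable]: "(\<lambda>\<tau>. Q \<tau> j) \<in> borel_measurable (lebesgue_on {0..1})"
      "(\<lambda>\<tau>. Q \<tau> k) \<in> borel_measurable (lebesgue_on {0..1})"
      "(\<lambda>\<tau>. \<psi> \<tau> j) \<in> borel_measurable (lebesgue_on {0..1})"
      "(\<lambda>\<tau>. \<psi> \<tau> k) \<in> borel_measurable (lebesgue_on {0..1})"
      using meas by auto
    show "(\<lambda>\<tau>. (\<psi> \<tau> j - \<psi> \<tau> k)\<^sup>2 * K j k * log_mean (Q \<tau> j) (Q \<tau> k) * \<pi> j)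
            \<in> borel_measurable (lebesgue_on {0..1})"
      by measurable
  qed
qed

lemma admissible_path_action_density_nonneg:
  assumes rs: "row_stochastic n K" and rev: "reversible_wrt n K \<pi>"
    and adm: "admissible_path n K \<pi> Q0 Q1 Q \<psi>" and "\<tau> \<in> {0..1}"
  shows "0 \<le> action_density n K \<pi> (Q \<tau>) (\<psi> \<tau>)"
  using adm rev assms(4) unfolding admissible_path_def prob_density_def reversible_wrt_def
  by (intro action_density_nonneg[OF rs]) (auto simp: less_imp_le)

lemma admissible_path_action_has_integral:
  assumes rs: "row_stochastic n K" and rev: "reversible_wrt n K \<pi>"
    and adm: "admissible_path n K \<pi> Q0 Q1 Q \<psi>"
    and A: "action n K \<pi> Q \<psi> = ennreal A" "0 \<le> A"
  shows "((\<lambda>\<tau>. action_density n K \<pi> (Q \<tau>) (\<psi> \<tau>)) has_integral A) {0..1}"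
  using A admissible_path_action_density_measurable[OF adm]
    admissible_path_action_density_nonneg[OF rs rev adm]
  by (intro set_nn_integral_eq_ennreal_imp_has_integral) (auto simp: action_eq_set_nn_integral)

lemma admissible_path_tail_mass:
  assumes rev: "reversible_wrt n K \<pi>" and i: "i + 1 < n"
    and adm: "admissible_path n K \<pi> (\<lambda>j. unit_vec i j / \<pi> j) (\<lambda>j. unit_vec (i+1) j / \<pi> j) Q \<psi>"
  defines "F \<equiv> \<lambda>\<tau>. \<Sum>j\<in>{i+1..<n}. \<pi> j * Q \<tau> j"
  shows "F piecewise_C1_differentiable_on {0..1}" "F 0 = 0" "F 1 = 1"
    and "\<And>\<tau>. \<tau> \<in> {0..1} \<Longrightarrow> F \<tau> \<in> {0..1}"
proof -
  have \<pi>: "\<And>j. j < n \<Longrightarrow> 0 < \<pi> j"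
    using rev unfolding reversible_wrt_def by auto
  have pc: "\<And>j. j < n \<Longrightarrow> (\<lambda>\<tau>. Q \<tau> j) piecewise_C1_differentiable_on {0..1}"
    and ends: "\<And>j. j < n \<Longrightarrow> Q 0 j = unit_vec i j / \<pi> j \<and> Q 1 j = unit_vec (i+1) j / \<pi> j"
    and dens: "\<And>\<tau>. \<tau> \<in> {0..1} \<Longrightarrow> prob_density n \<pi> (Q \<tau>)"
    using adm unfolding admissible_path_def by auto
  show "F piecewise_C1_differentiable_on {0..1}"
    unfolding F_def using piecewise_C1_differentiable_scaleR[OF pc]
    by (intro piecewise_C1_differentiable_sum) auto
  show "F 0 = 0"
    unfolding F_def using ends by (intro sum.neutral) (auto simp: unit_vec_def)
  have "0 < \<pi> (i+1)"
    using \<pi> i by simp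
  then have "F 1 = (\<Sum>j\<in>{i+1..<n}. if j = i + 1 then 1 else 0)"
    unfolding F_def using ends by (intro sum.cong) (auto simp: unit_vec_def)
  then show "F 1 = 1"
    using i by simp
  show "F \<tau> \<in> {0..1}" if "\<tau> \<in> {0..1}" for \<tau>
    using prob_density_tail_bounds[OF dens[OF that] \<pi> i] unfolding F_def by auto
qed

lemma admissible_path_continuity_equation:
  assumes "admissible_path n K \<pi> Q0 Q1 Q \<psi>"
  obtains N where "negligible N"
    and "\<And>\<tau> j. \<tau> \<in> {0..1} - N \<Longrightarrow> j < n \<Longrightarrow>
           ((\<lambda>t. Q t j) has_real_derivative - outflow n K (Q \<tau>) (\<psi> \<tau>) j) (at \<tau>)"
proof -
  have "AE \<tau> in lebesgue. \<tau> \<in> {0..1} \<longrightarrow>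
          (\<forall>j<n. ((\<lambda>t. Q t j) has_real_derivative - outflow n K (Q \<tau>) (\<psi> \<tau>) j) (at \<tau>))"
    using assms unfolding admissible_path_altdef by (auto intro: AE_completion)
  then obtain N where N: "negligible N" and sub: "{\<tau>. \<not> (\<tau> \<in> {0..1} \<longrightarrow>
      (\<forall>j<n. ((\<lambda>t. Q t j) has_real_derivative - outflow n K (Q \<tau>) (\<psi> \<tau>) j) (at \<tau>)))} \<subseteq> N"
    unfolding eventually_ae_filter_negligible by blast
  show thesis
    by (rule that[OF N]) (use sub in blast)
qed

lemma action_ge_edge_arclength:
  assumes tri: "tridiagonal n K" and rs: "row_stochastic n K" and rev: "reversible_wrt n K \<pi>"
    and i: "i + 1 < n" and pq: "0 < K (i+1) i" "0 < K i (i+1)"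
    and adm: "admissible_path n K \<pi> (\<lambda>j. unit_vec i j / \<pi> j) (\<lambda>j. unit_vec (i+1) j / \<pi> j) Q \<psi>"
  shows "ennreal ((edge_arclength (K (i+1) i) (K i (i+1)) 1)\<^sup>2) \<le> action n K \<pi> Q \<psi>"
proof -
  define F where "F \<tau> = (\<Sum>j\<in>{i+1..<n}. \<pi> j * Q \<tau> j)" for \<tau>
  define a where "a \<tau> = action_density n K \<pi> (Q \<tau>) (\<psi> \<tau>)" for \<tau>
  note F = admissible_path_tail_mass[OF rev i adm, folded F_def]
  have dens: "\<And>\<tau>. \<tau> \<in> {0..1} \<Longrightarrow> prob_density n \<pi> (Q \<tau>)"
    using adm unfolding admissible_path_def by auto
  obtain S F' where S: "finite S" and F': "\<And>x. x \<in> {0..1} - S \<Longrightarrow> (F has_real_derivative F' x) (at x)"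
    using piecewise_C1_differentiable_on_realE[OF F(1)] by blast
  obtain N where N: "negligible N"
    and cont_eq: "\<And>\<tau> j. \<tau> \<in> {0..1} - N \<Longrightarrow> j < n \<Longrightarrow>
           ((\<lambda>t. Q t j) has_real_derivative - outflow n K (Q \<tau>) (\<psi> \<tau>) j) (at \<tau>)"
    using admissible_path_continuity_equation[OF adm] by blast
  have energy: "(F' x)\<^sup>2 \<le> a x * edge_mean (K (i+1) i) (K i (i+1)) (F x)"
    if x: "x \<in> {0<..<1} - S - N" for x
  proof -
    have x01: "x \<in> {0..1}"
      using x by auto
    have "((\<lambda>t. \<pi> j * Q t j) has_real_derivative \<pi> j * - outflow n K (Q x) (\<psi> x) j) (at x)"
      if "j \<in> {i+1..<n}" for j
      using cont_eq[of x j] x that by (intro DERIV_cmult) auto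
    then have "(F has_real_derivative (\<Sum>j\<in>{i+1..<n}. \<pi> j * - outflow n K (Q x) (\<psi> x) j)) (at x)"
      unfolding F_def by (rule DERIV_sum)
    then have "F' x = - (\<Sum>j\<in>{i+1..<n}. \<pi> j * outflow n K (Q x) (\<psi> x) j)"
      using F'[of x] x DERIV_unique by (fastforce simp: sum_negf)
    then show ?thesis
      unfolding a_def F_def using tridiagonal_outflow_tail_sq_le[OF tri rs rev i pq(2) dens[OF x01]] by simp
  qed
  show ?thesis
  proof (cases "action n K \<pi> Q \<psi>" rule: ennreal_cases)
    case (real A)
    then have "(a has_integral A) {0..1}"
      unfolding a_def by (intro admissible_path_action_has_integral[OF rs rev adm])
    moreover have "0 \<le> a \<tau>" if "\<tau> \<in> {0..1}" for \<tau>
      unfolding a_def using that by (rule admissible_path_action_density_nonneg[OF rs rev adm])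
    ultimately have "(edge_arclength (K (i+1) i) (K i (i+1)) 1)\<^sup>2 \<le> A"
      using F piecewise_C1_differentiable_on_def S F' N energy pq
      by (intro edge_arclength_sq_le_energy[where F = F and S = S and F' = F' and N = N]) auto
    with real show ?thesis
      by (simp add: ennreal_leI)
  qed simp
qed

lemma edge_geodesic_continuity_equation:
  assumes rev: "reversible_wrt n K \<pi>" and i: "i + 1 < n" and pq: "0 < K (i+1) i" "0 < K i (i+1)"
    and t: "0 < \<tau>" "\<tau> < 1"
  shows "((\<lambda>t. edge_interpolant \<pi> i (edge_geodesic (K (i+1) i) (K i (i+1)) t) j) has_real_derivative
           - outflow n K (edge_interpolant \<pi> i (edge_geodesic (K (i+1) i) (K i (i+1)) \<tau>))
               (\<lambda>k. edge_geodesic_potential (K (i+1) i) (K i (i+1)) \<tau> * unit_vec (i+1) k) j) (at \<tau>)"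
proof -
  let ?m = "edge_geodesic (K (i+1) i) (K i (i+1))"
  let ?D = "(unit_vec (i+1) j / \<pi> j - unit_vec i j / \<pi> j) * (edge_geodesic_potential (K (i+1) i) (K i (i+1)) \<tau>
              * edge_mean (K (i+1) i) (K i (i+1)) (?m \<tau>))"
  have "((\<lambda>t. edge_interpolant \<pi> i (?m t) j) has_real_derivative ?D) (at \<tau>)"
    unfolding edge_interpolant_affine using edge_geodesic_deriv_potential[OF pq t]
    by (auto intro!: derivative_eq_intros)
  moreover have "- outflow n K (edge_interpolant \<pi> i (?m \<tau>))
      (\<lambda>k. edge_geodesic_potential (K (i+1) i) (K i (i+1)) \<tau> * unit_vec (i+1) k) j = ?D"
    unfolding outflow_edge_interpolant[OF rev i pq(2)] by (simp add: diff_divide_distrib algebra_simps)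
  ultimately show ?thesis
    by simp
qed

lemma admissible_path_edge_geodesic:
  assumes rev: "reversible_wrt n K \<pi>" and i: "i + 1 < n" and pq: "0 < K (i+1) i" "0 < K i (i+1)"
  shows "admissible_path n K \<pi> (\<lambda>j. unit_vec i j / \<pi> j) (\<lambda>j. unit_vec (i+1) j / \<pi> j)
           (\<lambda>t. edge_interpolant \<pi> i (edge_geodesic (K (i+1) i) (K i (i+1)) t))
           (\<lambda>t j. edge_geodesic_potential (K (i+1) i) (K i (i+1)) t * unit_vec (i+1) j)"
proof -
  let ?m = "edge_geodesic (K (i+1) i) (K i (i+1))"
  let ?\<phi> = "edge_geodesic_potential (K (i+1) i) (K i (i+1))"
  let ?Q = "\<lambda>t. edge_interpolant \<pi> i (?m t)"
  have \<pi>: "\<And>j. j < n \<Longrightarrow> 0 < \<pi> j"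
    using rev unfolding reversible_wrt_def by auto
  have "(\<lambda>t. ?Q t j) piecewise_C1_differentiable_on {0..1}" for j
    unfolding edge_interpolant_affine using edge_geodesic_piecewise_C1[OF pq]
    by (intro piecewise_C1_differentiable_add piecewise_C1_differentiable_const)
       (simp add: piecewise_C1_differentiable_scaleR[where f = ?m, simplified])
  moreover have "prob_density n \<pi> (?Q t)" if "t \<in> {0..1}" for t
    using edge_geodesic[OF pq, of t] that \<pi> i by (intro prob_density_edge_interpolant) auto
  moreover have "(\<lambda>t. ?\<phi> t * unit_vec (i+1) j) \<in> borel_measurable lborel" for j
    using borel_measurable_edge_geodesic_potential[OF pq] by (simp add: measurable_lborel1)
  moreover have "AE \<tau> in lborel. \<tau> \<in> {0..1} \<longrightarrow> (\<forall>j<n.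
      ((\<lambda>t. ?Q t j) has_real_derivative - outflow n K (?Q \<tau>) (\<lambda>k. ?\<phi> \<tau> * unit_vec (i+1) k) j) (at \<tau>))"
    using AE_lborel_singleton[of 0] AE_lborel_singleton[of 1]
  proof eventually_elim
    case (elim \<tau>)
    then show ?case
      using edge_geodesic_continuity_equation[OF rev i pq, of \<tau>] by auto
  qed
  moreover have "?Q 0 j = unit_vec i j / \<pi> j" "?Q 1 j = unit_vec (i+1) j / \<pi> j" for j
    using pq by (simp_all add: edge_interpolant_def)
  ultimately show ?thesis
    unfolding admissible_path_altdef by auto
qed

lemma action_edge_geodesic:
  assumes rev: "reversible_wrt n K \<pi>" and i: "i + 1 < n" and pq: "0 < K (i+1) i" "0 < K i (i+1)"
  shows "action n K \<pi> (\<lambda>t. edge_interpolant \<pi> i (edge_geodesic (K (i+1) i) (K i (i+1)) t))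
           (\<lambda>t j. edge_geodesic_potential (K (i+1) i) (K i (i+1)) t * unit_vec (i+1) j)
         = ennreal ((edge_arclength (K (i+1) i) (K i (i+1)) 1)\<^sup>2)"
proof -
  let ?L = "edge_arclength (K (i+1) i) (K i (i+1)) 1"
  have "action n K \<pi> (\<lambda>t. edge_interpolant \<pi> i (edge_geodesic (K (i+1) i) (K i (i+1)) t))
           (\<lambda>t j. edge_geodesic_potential (K (i+1) i) (K i (i+1)) t * unit_vec (i+1) j)
      = (\<integral>\<^sup>+\<tau>. ennreal (?L\<^sup>2) * indicator {0..1::real} \<tau> \<partial>lborel)"
    unfolding action_eq_set_nn_integral
  proof (rule nn_integral_cong_AE)
    show "AE \<tau> in lborel. ennreal (action_density n K \<pi>
          (edge_interpolant \<pi> i (edge_geodesic (K (i+1) i) (K i (i+1)) \<tau>))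
          (\<lambda>j. edge_geodesic_potential (K (i+1) i) (K i (i+1)) \<tau> * unit_vec (i+1) j))
        * indicator {0..1} \<tau> = ennreal (?L\<^sup>2) * indicator {0..1} \<tau>"
      using AE_lborel_singleton[of 0] AE_lborel_singleton[of 1]
    proof eventually_elim
      case (elim \<tau>)
      show ?case
      proof (cases "\<tau> \<in> {0..1}")
        case True
        with elim have "0 < \<tau>" "\<tau> < 1"
          by auto
        then show ?thesis
          using edge_geodesic_potential_energy[OF pq]
          unfolding action_density_edge_interpolant[OF rev i pq(2)] by simp
      qed simp
    qed
  qed
  then show ?thesis
    by (simp add: nn_integral_cmult_indicator)
qed

lemma W_N_sq_dens_eqI:
  assumes "admissible_path n K \<pi> Q0 Q1 Q \<psi>" "action n K \<pi> Q \<psi> = c"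
    and "\<And>Q \<psi>. admissible_path n K \<pi> Q0 Q1 Q \<psi> \<Longrightarrow> c \<le> action n K \<pi> Q \<psi>"
  shows "W_N_sq_dens n K \<pi> Q0 Q1 = c"
  unfolding W_N_sq_dens_def
  by (rule antisym, rule INF_lower2[of "(Q, \<psi>)"]) (use assms in \<open>auto intro!: INF_greatest\<close>)

theorem lemma6:
  fixes n :: nat and K :: "nat \<Rightarrow> nat \<Rightarrow> real" and \<pi> :: "nat \<Rightarrow> real" and i :: nat
  assumes "tridiagonal n K"
    and "irreducible_mat n K"
    and "row_stochastic n K"
    and "reversible_wrt n K \<pi>"
    and "i + 1 < n"
  shows "W_N_prob n K \<pi> (unit_vec i) (unit_vec (i + 1)) =
         (LINT r:{0..1}|lborel. 1 / sqrt (log_mean (K (i + 1) i * r) (K i (i + 1) * (1 - r))))"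
proof -
  let ?L = "edge_arclength (K (i+1) i) (K i (i+1)) 1"
  have pq: "0 < K (i+1) i" "0 < K i (i+1)"
    using tridiagonal_irreducible_edge_pos[OF assms] by auto
  have "W_N_sq_dens n K \<pi> (\<lambda>j. unit_vec i j / \<pi> j) (\<lambda>j. unit_vec (i+1) j / \<pi> j) = ennreal (?L\<^sup>2)"
    using admissible_path_edge_geodesic[OF assms(4,5) pq] action_edge_geodesic[OF assms(4,5) pq]
      action_ge_edge_arclength[OF assms(1,3,4,5) pq]
    by (rule W_N_sq_dens_eqI)
  then have "W_N_prob n K \<pi> (unit_vec i) (unit_vec (i + 1)) = ?L"
    using edge_arclength_1_pos[OF pq] by (simp add: W_N_prob_def W_N_dens_def)
  also have "\<dots> = (LINT r:{0..1}|lborel. edge_metric (K (i+1) i) (K i (i+1)) r)"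
    using set_lebesgue_integral_edge_metric[OF pq] by simp
  finally show ?thesis
    by (simp add: edge_metric_def edge_mean_def)
qed

end
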